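(* Let $G$ and $G'$ be connected graphs of bounded degree which are quasi-isometric. If $G$ is extraterrestrial, then $G'$ is extraterrestrial.
   Context: A graph $G=(V,E)$ has undirected edges; $d_G$ is the shortest-path metric on $V$. A path of length $n$ is a sequence $w_0,\dots,w_n$ of distinct vertices with consecutive ones adjacent. For finite $A,B\subseteq V$, a matching is a relation $M\subseteq A\times B$ whose two coordinate projections are injective; it is complete if it induces a bijection $A\to B$; it is by paths of length at most $k$ if $d_G(u,v)\le k$ for every $(u,v)\in M$. For integers $m,k,r\ge 0$, an $(m,k,r)$-UFO in $G$ is a triple $(U,F,O)$ of pairwise disjoint finite subsets of $V$, with $U$ nonempty, such that: (1) $|U|\ge m|F|$; (2) there is a complete matching between $U$ and $O$ by paths of length at most $k$; (3) every path in $G$ from a vertex of $U$ to a vertex of $O$ either contains a vertex of $F$ or has length at least $r$. A graph $G$ is extraterrestrial if for every $m\in\mathbb N$ there exists $k\in\mathbb N$ such that for every $r\in\mathbb N$ there exists an $(m,k,r)$-UFO in $G$. Graphs $G=(V,E)$, $G'=(V',E')$ are quasi-isometric if there are $f:V\to V'$ and constants $A,B,C>0$ with $\frac1A d_G(v_1,v_2)-B\le d_{G'}(f(v_1),f(v_2))\le A d_G(v_1,v_2)+B$ for all $v_1,v_2\in V$, and every $v'\in V'$ is at $d_{G'}$-distance at most $C$ from $f(V)$. *)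

theory Defs
  imports Complex_Main
begin

text \<open>A graph is given by its vertex type (all elements of the type are vertices)
  and a symmetric, irreflexive adjacency relation.\<close>

definition graph :: "('a \<Rightarrow> 'a \<Rightarrow> bool) \<Rightarrow> bool" where
  "graph E \<longleftrightarrow> (\<forall>u v. E u v \<longrightarrow> E v u) \<and> (\<forall>v. \<not> E v v)"

definition bounded_degree :: "('a \<Rightarrow> 'a \<Rightarrow> bool) \<Rightarrow> bool" where
  "bounded_degree E \<longleftrightarrow> (\<exists>D::nat. \<forall>v. finite {w. E v w} \<and> card {w. E v w} \<le> D)"

definition is_path :: "('a \<Rightarrow> 'a \<Rightarrow> bool) \<Rightarrow> 'a list \<Rightarrow> bool" where
  "is_path E ws \<longleftrightarrow> ws \<noteq> [] \<and> distinct ws \<and> (\<forall>i. Suc i < length ws \<longrightarrow> E (ws ! i) (ws ! Suc i))"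

definition path_len :: "'a list \<Rightarrow> nat" where
  "path_len ws = length ws - 1"

definition connected_graph :: "('a \<Rightarrow> 'a \<Rightarrow> bool) \<Rightarrow> bool" where
  "connected_graph E \<longleftrightarrow> (\<forall>u v. \<exists>ws. is_path E ws \<and> hd ws = u \<and> last ws = v)"

text \<open>Shortest-path distance (meaningful for connected graphs).\<close>

definition gdist :: "('a \<Rightarrow> 'a \<Rightarrow> bool) \<Rightarrow> 'a \<Rightarrow> 'a \<Rightarrow> nat" where
  "gdist E u v = (LEAST n. \<exists>ws. is_path E ws \<and> hd ws = u \<and> last ws = v \<and> path_len ws = n)"

definition complete_matching_k :: "('a \<Rightarrow> 'a \<Rightarrow> bool) \<Rightarrow> nat \<Rightarrow> 'a set \<Rightarrow> 'a set \<Rightarrow> bool" where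
  "complete_matching_k E k A B \<longleftrightarrow>
     (\<exists>M. M \<subseteq> A \<times> B \<and> inj_on fst M \<and> inj_on snd M \<and> fst ` M = A \<and> snd ` M = B
        \<and> (\<forall>(u,v)\<in>M. gdist E u v \<le> k))"

definition UFO :: "('a \<Rightarrow> 'a \<Rightarrow> bool) \<Rightarrow> nat \<Rightarrow> nat \<Rightarrow> nat \<Rightarrow> 'a set \<Rightarrow> 'a set \<Rightarrow> 'a set \<Rightarrow> bool" where
  "UFO E m k r U F Ob \<longleftrightarrow>
     finite U \<and> finite F \<and> finite Ob \<and> U \<inter> F = {} \<and> U \<inter> Ob = {} \<and> F \<inter> Ob = {} \<and> U \<noteq> {}
     \<and> card U \<ge> m * card F
     \<and> complete_matching_k E k U Ob
     \<and> (\<forall>ws. is_path E ws \<and> hd ws \<in> U \<and> last ws \<in> Ob \<longrightarrow> set ws \<inter> F \<noteq> {} \<or> path_len ws \<ge> r)"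

definition extraterrestrial :: "('a \<Rightarrow> 'a \<Rightarrow> bool) \<Rightarrow> bool" where
  "extraterrestrial E \<longleftrightarrow> (\<forall>m. \<exists>k. \<forall>r. \<exists>U F Ob. UFO E m k r U F Ob)"

definition quasi_isometric :: "('a \<Rightarrow> 'a \<Rightarrow> bool) \<Rightarrow> ('b \<Rightarrow> 'b \<Rightarrow> bool) \<Rightarrow> bool" where
  "quasi_isometric E E' \<longleftrightarrow>
     (\<exists>(f::'a \<Rightarrow> 'b) (A::real) (B::real) (C::real). A > 0 \<and> B > 0 \<and> C > 0
        \<and> (\<forall>v1 v2. real (gdist E v1 v2) / A - B \<le> real (gdist E' (f v1) (f v2))
                 \<and> real (gdist E' (f v1) (f v2)) \<le> A * real (gdist E v1 v2) + B)
        \<and> (\<forall>v'. \<exists>v. real (gdist E' v' (f v)) \<le> C))"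

end

theory Submission
  imports Defs
begin

text \<open>Let f be the quasi-isometry and (U, F, O) a UFO of G. As the forbidden set in G' take
  the thickening of f(F), its R-neighbourhood for a suitable constant R; by bounded degree it has
  at most |F| (D'+1)^R vertices. Discard the matched pairs whose images meet the thickening (their
  endpoints lie in a bounded neighbourhood of F, so there are O(|F|) of them), and among the rest
  choose greedily a subfamily on which f is injective on both sides; fibres of f are bounded, so
  this costs only a constant factor. The images of its two sides form U' and O'. A path in G' from
  U' to O' avoiding the thickening lifts, edge by edge via coarse surjectivity, to a walk in G from
  U to O avoiding F that is longer by at most a constant factor, so separation in G transfers to G'.
  Matching distances grow by at most the factor A.\<close>

section \<open>Paths and graph distance\<close>

lemma is_path_iff_successively: "is_path E ws \<longleftrightarrow> ws \<noteq> [] \<and> distinct ws \<and> successively E ws"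
  unfolding is_path_def successively_conv_nth by blast

lemma walk_shortens_to_path:
  assumes "ws \<noteq> []" "successively E ws"
  shows "\<exists>ps. is_path E ps \<and> hd ps = hd ws \<and> last ps = last ws \<and> set ps \<subseteq> set ws
    \<and> length ps \<le> length ws"
  using assms
proof (induction "length ws" arbitrary: ws rule: less_induct)
  case less
  show ?case
  proof (cases "distinct ws")
    case True
    then show ?thesis using less.prems by (auto simp: is_path_iff_successively)
  next
    case False
    then obtain xs ys zs y where ws: "ws = xs @ [y] @ ys @ [y] @ zs"
      using not_distinct_decomp by blast
    let ?shortcut = "xs @ [y] @ zs"
    have "successively E ?shortcut"
      using less.prems(2) unfolding ws
      by (auto simp: successively_append_iff successively_Cons split: if_splits)
    moreover have "length ?shortcut < length ws" using ws by simp
    ultimately obtain ps where "is_path E ps" "hd ps = hd ?shortcut" "last ps = last ?shortcut"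
      "set ps \<subseteq> set ?shortcut" "length ps \<le> length ?shortcut"
      using less.hyps by blast
    moreover have "hd ?shortcut = hd ws" "last ?shortcut = last ws" "set ?shortcut \<subseteq> set ws"
      using ws by (auto simp: hd_append)
    ultimately show ?thesis using \<open>length ?shortcut < length ws\<close> by (metis order.trans less_imp_le)
  qed
qed

lemma walk_join:
  assumes "successively E p" "successively E q" "p \<noteq> []" "q \<noteq> []" "last p = hd q"
  shows "successively E (p @ tl q)" "hd (p @ tl q) = hd p" "last (p @ tl q) = last q"
    "set (p @ tl q) \<subseteq> set p \<union> set q" "length (p @ tl q) = length p + length q - 1"
  using assms by (cases q; auto simp: successively_append_iff successively_Cons last_append)+

lemma gdist_le_path_len: "is_path E ws \<Longrightarrow> gdist E (hd ws) (last ws) \<le> path_len ws"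
  unfolding gdist_def by (rule Least_le) blast

lemma gdist_geodesic:
  assumes "connected_graph E"
  shows "\<exists>ws. is_path E ws \<and> hd ws = u \<and> last ws = v \<and> path_len ws = gdist E u v"
proof -
  have "\<exists>n ws. is_path E ws \<and> hd ws = u \<and> last ws = v \<and> path_len ws = n"
    using assms unfolding connected_graph_def by blast
  from LeastI_ex[OF this] show ?thesis unfolding gdist_def by blast
qed

lemma gdist_le_walk:
  assumes "ws \<noteq> []" "successively E ws"
  shows "gdist E (hd ws) (last ws) \<le> length ws - 1"
proof -
  obtain ps where "is_path E ps" "hd ps = hd ws" "last ps = last ws" "length ps \<le> length ws"
    using walk_shortens_to_path[OF assms] by blast
  then show ?thesis using gdist_le_path_len[of E ps] unfolding path_len_def by auto
qed

lemma gdist_self: "gdist E u u = 0"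
  using gdist_le_path_len[of E "[u]"] by (simp add: is_path_def path_len_def)

lemma gdist_adjacent_le: "E u v \<Longrightarrow> gdist E u v \<le> 1"
  using gdist_le_walk[of "[u, v]" E] by simp

lemma gdist_sym:
  assumes "graph E" "connected_graph E"
  shows "gdist E u v = gdist E v u"
proof -
  have reverse: "gdist E v u \<le> gdist E u v" for u v
  proof -
    obtain ws where ws: "is_path E ws" "hd ws = u" "last ws = v" "path_len ws = gdist E u v"
      using gdist_geodesic[OF assms(2)] by blast
    have "successively E (rev ws)"
      using ws(1) assms(1) unfolding is_path_iff_successively graph_def
      by (auto intro: successively_mono)
    then show ?thesis
      using gdist_le_walk[of "rev ws" E] ws by (auto simp: is_path_def hd_rev last_rev path_len_def)
  qed
  show ?thesis using reverse[of u v] reverse[of v u] by simp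
qed

lemma gdist_triangle:
  assumes "connected_graph E"
  shows "gdist E u w \<le> gdist E u v + gdist E v w"
proof -
  obtain p where p: "is_path E p" "hd p = u" "last p = v" "path_len p = gdist E u v"
    using gdist_geodesic[OF assms] by blast
  obtain q where q: "is_path E q" "hd q = v" "last q = w" "path_len q = gdist E v w"
    using gdist_geodesic[OF assms] by blast
  have "p \<noteq> []" "q \<noteq> []" "successively E p" "successively E q"
    using p q by (auto simp: is_path_iff_successively)
  note joined = walk_join[OF this(3,4,1,2)]
  have "gdist E u w \<le> length (p @ tl q) - 1"
    using gdist_le_walk[OF _ joined(1)] joined(2,3) p q \<open>p \<noteq> []\<close> by simp
  then show ?thesis using joined(5) p q \<open>p \<noteq> []\<close> \<open>q \<noteq> []\<close> by (simp add: path_len_def)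
qed

lemma gdist_hd_nth_le:
  assumes "is_path E ps" "i < length ps"
  shows "gdist E (hd ps) (ps ! i) \<le> i"
proof -
  have "take (Suc i) ps \<noteq> []" "successively E (take (Suc i) ps)"
    using assms unfolding is_path_iff_successively successively_conv_nth by auto
  moreover have "hd (take (Suc i) ps) = hd ps" "last (take (Suc i) ps) = ps ! i"
    using assms by (auto simp: is_path_def hd_conv_nth last_conv_nth min_def
        intro: arg_cong[where f = "(!) ps"])
  ultimately show ?thesis using gdist_le_walk[of "take (Suc i) ps" E] assms by simp
qed

lemma gdist_hd_le_path_len:
  assumes "is_path E ps" "y \<in> set ps"
  shows "gdist E (hd ps) y \<le> path_len ps"
proof -
  obtain i where "i < length ps" "y = ps ! i" using assms(2) by (auto simp: in_set_conv_nth)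
  then show ?thesis using gdist_hd_nth_le[OF assms(1), of i] by (auto simp: path_len_def)
qed

definition separates :: "('a \<Rightarrow> 'a \<Rightarrow> bool) \<Rightarrow> 'a set \<Rightarrow> 'a set \<Rightarrow> 'a set \<Rightarrow> nat \<Rightarrow> bool" where
  "separates E F U Ob r \<longleftrightarrow>
     (\<forall>ws. is_path E ws \<and> hd ws \<in> U \<and> last ws \<in> Ob \<longrightarrow> set ws \<inter> F \<noteq> {} \<or> path_len ws \<ge> r)"

lemma UFO_iff_separates:
  "UFO E m k r U F Ob \<longleftrightarrow>
     finite U \<and> finite F \<and> finite Ob \<and> U \<inter> F = {} \<and> U \<inter> Ob = {} \<and> F \<inter> Ob = {} \<and> U \<noteq> {}
     \<and> card U \<ge> m * card F \<and> complete_matching_k E k U Ob \<and> separates E F U Ob r"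
  unfolding UFO_def separates_def by blast

lemma separates_mono:
  "separates E F U Ob r \<Longrightarrow> U' \<subseteq> U \<Longrightarrow> Ob' \<subseteq> Ob \<Longrightarrow> separates E F U' Ob' r"
  unfolding separates_def by blast

lemma separates_walk_long:
  assumes "separates E F U Ob r" and "ws \<noteq> []" "successively E ws"
    and "hd ws \<in> U" "last ws \<in> Ob" "set ws \<inter> F = {}"
  shows "r \<le> length ws - 1"
proof -
  obtain ps where "is_path E ps" "hd ps = hd ws" "last ps = last ws" "set ps \<subseteq> set ws"
    "length ps \<le> length ws"
    using walk_shortens_to_path[OF assms(2,3)] by blast
  then show ?thesis using assms unfolding separates_def path_len_def by fastforce
qed

section \<open>Counting in graphs of bounded degree\<close>

lemma gdist_eq_0_iff:
  assumes "connected_graph E"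
  shows "gdist E x y = 0 \<longleftrightarrow> y = x"
proof
  assume "gdist E x y = 0"
  moreover obtain ws where "is_path E ws" "hd ws = x" "last ws = y" "path_len ws = gdist E x y"
    using gdist_geodesic[OF assms] by blast
  ultimately show "y = x" by (cases ws) (auto simp: path_len_def is_path_def)
qed (simp add: gdist_self)

lemma ball_Suc_subset:
  assumes "connected_graph E"
  shows "{y. gdist E x y \<le> Suc t} \<subseteq> (\<Union>y\<in>{y. gdist E x y \<le> t}. insert y {z. E y z})"
proof
  fix z assume z: "z \<in> {y. gdist E x y \<le> Suc t}"
  show "z \<in> (\<Union>y\<in>{y. gdist E x y \<le> t}. insert y {z. E y z})"
  proof (cases "gdist E x z \<le> t")
    case True then show ?thesis by blast
  next
    case False
    obtain ps where ps: "is_path E ps" "hd ps = x" "last ps = z" "path_len ps = gdist E x z"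
      using gdist_geodesic[OF assms] by blast
    with False z have len: "length ps = Suc (Suc t)" by (auto simp: path_len_def)
    then have "E (ps ! t) z" using ps by (auto simp: is_path_def last_conv_nth)
    moreover have "gdist E x (ps ! t) \<le> t" using gdist_hd_nth_le[of E ps t] ps len by auto
    ultimately show ?thesis by blast
  qed
qed

lemma ball_finite_card_le:
  assumes conn: "connected_graph E" and deg: "\<forall>v. finite {w. E v w} \<and> card {w. E v w} \<le> D"
  shows "finite {y. gdist E x y \<le> t} \<and> card {y. gdist E x y \<le> t} \<le> (D + 1) ^ t"
proof (induction t)
  case 0
  then show ?case using gdist_eq_0_iff[OF conn] by simp
next
  case (Suc t)
  let ?ball = "{y. gdist E x y \<le> t}"
  let ?N = "\<Union>y\<in>?ball. insert y {z. E y z}"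
  have "finite ?N" using Suc deg by auto
  moreover have "card ?N \<le> (D + 1) ^ Suc t"
  proof -
    have "card ?N \<le> (\<Sum>y\<in>?ball. card (insert y {z. E y z}))"
      using card_UN_le Suc by blast
    also have "\<dots> \<le> (\<Sum>y\<in>?ball. D + 1)"
      by (rule sum_mono) (use deg in \<open>auto intro: le_trans[OF card_insert_le_m1]\<close>)
    also have "\<dots> = card ?ball * (D + 1)" by simp
    also have "\<dots> \<le> (D + 1) ^ t * (D + 1)" using Suc by (intro mult_le_mono1) simp
    finally show ?thesis by (simp add: mult.commute)
  qed
  ultimately show ?case using ball_Suc_subset[OF conn] by (meson card_mono finite_subset order_trans)
qed

lemma finite_card_le_within_dist:
  assumes "connected_graph E" "\<forall>v. finite {w. E v w} \<and> card {w. E v w} \<le> D" "finite F"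
    and near: "\<forall>y\<in>X. \<exists>x\<in>F. gdist E (c x) y \<le> t"
  shows "finite X \<and> card X \<le> card F * (D + 1) ^ t"
proof -
  let ?balls = "\<Union>x\<in>F. {y. gdist E (c x) y \<le> t}"
  have balls: "finite {y. gdist E (c x) y \<le> t}" "card {y. gdist E (c x) y \<le> t} \<le> (D + 1) ^ t" for x
    using ball_finite_card_le[OF assms(1,2)] by auto
  have "X \<subseteq> ?balls" using near by blast
  moreover have "finite ?balls" using balls \<open>finite F\<close> by blast
  moreover have "card ?balls \<le> card F * (D + 1) ^ t"
  proof -
    have "card ?balls \<le> (\<Sum>x\<in>F. card {y. gdist E (c x) y \<le> t})"
      using card_UN_le[OF \<open>finite F\<close>] by blast
    also have "\<dots> \<le> (\<Sum>x\<in>F. (D + 1) ^ t)" by (rule sum_mono) (rule balls)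
    finally show ?thesis by simp
  qed
  ultimately show ?thesis by (meson card_mono finite_subset order_trans)
qed

lemma exists_large_subset_inj_on_both:
  fixes g1 g2 :: "'a \<Rightarrow> 'b"
  assumes "finite S"
    and "\<forall>s\<in>S. card {s'\<in>S. g1 s' = g1 s} \<le> c" "\<forall>s\<in>S. card {s'\<in>S. g2 s' = g2 s} \<le> c"
  shows "\<exists>S0\<subseteq>S. inj_on g1 S0 \<and> inj_on g2 S0 \<and> card S \<le> 2 * c * card S0"
  using assms
proof (induction S rule: finite_psubset_induct)
  case (psubset S)
  show ?case
  proof (cases "S = {}")
    case True then show ?thesis by auto
  next
    case False
    then obtain s where s: "s \<in> S" by blast
    let ?T = "{s'\<in>S. g1 s' = g1 s} \<union> {s'\<in>S. g2 s' = g2 s}"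
    have card_T: "card ?T \<le> 2 * c"
      using card_Un_le[of "{s'\<in>S. g1 s' = g1 s}" "{s'\<in>S. g2 s' = g2 s}"] psubset.prems s by force
    have restrict: "\<forall>x\<in>S - ?T. card {s'\<in>S - ?T. g s' = g x} \<le> c"
      if "\<forall>x\<in>S. card {s'\<in>S. g s' = g x} \<le> c" for g :: "'a \<Rightarrow> 'b"
    proof
      fix x assume "x \<in> S - ?T"
      have "card {s'\<in>S - ?T. g s' = g x} \<le> card {s'\<in>S. g s' = g x}"
        by (rule card_mono) (use psubset.hyps in auto)
      then show "card {s'\<in>S - ?T. g s' = g x} \<le> c" using that \<open>x \<in> S - ?T\<close> by force
    qed
    have "S - ?T \<subset> S" using s by blast
    from psubset.IH[OF this restrict[OF psubset.prems(1)] restrict[OF psubset.prems(2)]]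
    obtain S1 where S1: "S1 \<subseteq> S - ?T" "inj_on g1 S1" "inj_on g2 S1"
      "card (S - ?T) \<le> 2 * c * card S1"
      by blast
    have "finite S1" using S1(1) psubset.hyps finite_subset by blast
    have "s \<notin> S1" using S1(1) s by blast
    have "?T \<union> (S - ?T) = S" by blast
    then have "card S = card (?T \<union> (S - ?T))" by (simp only:)
    also have "\<dots> = card ?T + card (S - ?T)"
      by (rule card_Un_disjoint) (use psubset.hyps in auto)
    also have "\<dots> \<le> 2 * c * card (insert s S1)"
      using card_T S1(4) \<open>finite S1\<close> \<open>s \<notin> S1\<close> by (simp add: algebra_simps)
    finally show ?thesis using S1 s by (auto intro!: exI[of _ "insert s S1"])
  qed
qed

lemma card_matching_le_avoiding:
  assumes "finite M" "inj_on fst M" "inj_on snd M" "finite P"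
  shows "card M \<le> card {p\<in>M. fst p \<notin> P \<and> snd p \<notin> P} + 2 * card P"
proof -
  let ?S = "{p\<in>M. fst p \<notin> P \<and> snd p \<notin> P}"
  have hits: "card {p\<in>M. h p \<in> P} \<le> card P" if "inj_on h M" for h :: "'a \<times> 'a \<Rightarrow> 'a"
    by (rule card_inj_on_le[OF inj_on_subset[OF that]]) (use \<open>finite P\<close> in auto)
  have "card M \<le> card ((?S \<union> {p\<in>M. fst p \<in> P}) \<union> {p\<in>M. snd p \<in> P})"
    by (rule card_mono) (use \<open>finite M\<close> in auto)
  also have "\<dots> \<le> card (?S \<union> {p\<in>M. fst p \<in> P}) + card {p\<in>M. snd p \<in> P}"
    by (rule card_Un_le)
  also have "\<dots> \<le> card ?S + card {p\<in>M. fst p \<in> P} + card {p\<in>M. snd p \<in> P}"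
    using card_Un_le[of ?S] by simp
  also have "\<dots> \<le> card ?S + 2 * card P" using hits[OF assms(2)] hits[OF assms(3)] by simp
  finally show ?thesis .
qed

section \<open>Transporting a UFO along a quasi-isometry\<close>

locale quasi_isometric_graphs =
  fixes E :: "'a \<Rightarrow> 'a \<Rightarrow> bool" and E' :: "'b \<Rightarrow> 'b \<Rightarrow> bool" and f :: "'a \<Rightarrow> 'b"
    and A B C :: real and D D' :: nat
  assumes connected: "connected_graph E"
    and graph': "graph E'" and connected': "connected_graph E'"
    and degree: "\<forall>v. finite {w. E v w} \<and> card {w. E v w} \<le> D"
    and degree': "\<forall>v. finite {w. E' v w} \<and> card {w. E' v w} \<le> D'"
    and constants_pos: "A > 0" "B > 0" "C > 0"
    and lower: "\<And>v1 v2. real (gdist E v1 v2) / A - B \<le> real (gdist E' (f v1) (f v2))"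
    and upper: "\<And>v1 v2. real (gdist E' (f v1) (f v2)) \<le> A * real (gdist E v1 v2) + B"
    and coarsely_onto: "\<And>v'. \<exists>v. real (gdist E' v' (f v)) \<le> C"
begin

lemma gdist_le_image: "real (gdist E v1 v2) \<le> A * (real (gdist E' (f v1) (f v2)) + B)"
  using lower[of v1 v2] constants_pos by (simp add: divide_le_eq algebra_simps)

lemma gdist'_triangle: "real (gdist E' u w) \<le> real (gdist E' u v) + real (gdist E' v w)"
  using gdist_triangle[OF connected'] by (metis of_nat_add of_nat_le_iff)

lemmas gdist'_sym = gdist_sym[OF graph' connected']

definition lift_len :: nat where
  "lift_len = nat \<lceil>A * (2 * C + 1 + B)\<rceil>"

text \<open>The two summands of radius are what lift_step and image_collision_in_thickening need.\<close>

definition radius :: real where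
  "radius = C + A * real lift_len + B + A * (A * B)"

definition thickening :: "'a set \<Rightarrow> 'b set" where
  "thickening F = {w. \<exists>x\<in>F. real (gdist E' w (f x)) \<le> radius}"

definition fibre_bound :: nat where
  "fibre_bound = (D + 1) ^ nat \<lfloor>A * B\<rfloor>"

definition preimage_bound :: nat where
  "preimage_bound = (D + 1) ^ nat \<lfloor>A * (radius + B)\<rfloor>"

definition thickening_bound :: nat where
  "thickening_bound = (D' + 1) ^ nat \<lfloor>radius\<rfloor>"

lemma lift_step:
  assumes "w \<notin> thickening F" "real (gdist E' w (f v)) \<le> C" "real (gdist E' w (f v2)) \<le> C + 1"
  shows "\<exists>ps. is_path E ps \<and> hd ps = v \<and> last ps = v2 \<and> path_len ps \<le> lift_len \<and> set ps \<inter> F = {}"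
proof -
  have "real (gdist E' (f v) (f v2)) \<le> 2 * C + 1"
    using gdist'_triangle[of "f v" "f v2" w] gdist'_sym[of w "f v"] assms(2,3) by linarith
  then have "real (gdist E v v2) \<le> A * (2 * C + 1 + B)"
    using gdist_le_image[of v v2] constants_pos(1) by (smt (verit) mult_left_mono)
  then have short: "gdist E v v2 \<le> lift_len"
    unfolding lift_len_def using real_nat_ceiling_ge[of "A * (2 * C + 1 + B)"] by linarith
  obtain ps where ps: "is_path E ps" "hd ps = v" "last ps = v2" "path_len ps = gdist E v v2"
    using gdist_geodesic[OF connected] by blast
  have "set ps \<inter> F = {}"
  proof (rule ccontr)
    assume "set ps \<inter> F \<noteq> {}"
    then obtain y where y: "y \<in> set ps" "y \<in> F" by blast
    have "gdist E v y \<le> lift_len" using gdist_hd_le_path_len[OF ps(1) y(1)] ps short by simp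
    then have "real (gdist E' (f v) (f y)) \<le> A * real lift_len + B"
      using upper[of v y] constants_pos(1) by (smt (verit) mult_left_mono of_nat_le_iff)
    then have "real (gdist E' w (f y)) \<le> radius"
      using gdist'_triangle[of w "f y" "f v"] assms(2) constants_pos unfolding radius_def
      by (smt (verit) mult_pos_pos)
    then show False using assms(1) y(2) unfolding thickening_def by blast
  qed
  then show ?thesis using ps short by auto
qed

lemma lift_walk:
  assumes "successively E' (w # ws)" "set (w # ws) \<inter> thickening F = {}"
    and "real (gdist E' w (f v)) \<le> C" "real (gdist E' (last (w # ws)) (f z)) \<le> C"
  shows "\<exists>wk. wk \<noteq> [] \<and> successively E wk \<and> hd wk = v \<and> last wk = z \<and> set wk \<inter> F = {}
    \<and> length wk \<le> Suc (lift_len * Suc (length ws))"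
  using assms
proof (induction ws arbitrary: w v)
  case Nil
  then obtain ps where "is_path E ps" "hd ps = v" "last ps = z" "path_len ps \<le> lift_len"
    "set ps \<inter> F = {}"
    using lift_step[of w F v z] by auto
  then show ?case by (intro exI[of _ ps]) (auto simp: is_path_iff_successively path_len_def)
next
  case (Cons w2 ws)
  obtain v2 where v2: "real (gdist E' w2 (f v2)) \<le> C" using coarsely_onto by blast
  have "gdist E' w w2 \<le> 1" using gdist_adjacent_le[of E' w w2] Cons.prems(1) by simp
  then have "real (gdist E' w (f v2)) \<le> C + 1" using gdist'_triangle[of w "f v2" w2] v2 by linarith
  then obtain p where p: "is_path E p" "hd p = v" "last p = v2" "path_len p \<le> lift_len"
    "set p \<inter> F = {}"
    using lift_step[of w F v v2] Cons.prems(2,3) by auto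
  obtain wk where wk: "wk \<noteq> []" "successively E wk" "hd wk = v2" "last wk = z" "set wk \<inter> F = {}"
    "length wk \<le> Suc (lift_len * Suc (length ws))"
    using Cons.IH[of w2 v2] Cons.prems v2 by auto
  have "p \<noteq> []" "successively E p" using p(1) by (auto simp: is_path_iff_successively)
  note joined = walk_join[OF this(2) wk(2) this(1) wk(1)]
  show ?case
  proof (intro exI[of _ "p @ tl wk"] conjI)
    show "length (p @ tl wk) \<le> Suc (lift_len * Suc (length (w2 # ws)))"
      using joined(5) p(4) wk(6) by (simp add: path_len_def)
  qed (use joined p wk \<open>p \<noteq> []\<close> in auto)
qed


lemma thickening_finite_card_le:
  assumes "finite F"
  shows "finite (thickening F) \<and> card (thickening F) \<le> card F * thickening_bound"
proof -
  have "\<forall>y\<in>thickening F. \<exists>x\<in>F. gdist E' (f x) y \<le> nat \<lfloor>radius\<rfloor>"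
    unfolding thickening_def using gdist'_sym le_nat_floor by fastforce
  then show ?thesis
    using finite_card_le_within_dist[OF connected' degree' assms] unfolding thickening_bound_def
    by blast
qed

lemma preimage_thickening_finite_card_le:
  assumes "finite F"
  shows "finite (f -` thickening F) \<and> card (f -` thickening F) \<le> card F * preimage_bound"
proof -
  have "gdist E x u \<le> nat \<lfloor>A * (radius + B)\<rfloor>"
    if "x \<in> F" "real (gdist E' (f u) (f x)) \<le> radius" for x u
  proof -
    have "real (gdist E x u) \<le> A * (radius + B)"
      using gdist_le_image[of x u] gdist'_sym[of "f x" "f u"] that(2) constants_pos(1)
      by (smt (verit) mult_left_mono)
    then show ?thesis using le_nat_floor by blast
  qed
  then have "\<forall>u\<in>f -` thickening F. \<exists>x\<in>F. gdist E (id x) u \<le> nat \<lfloor>A * (radius + B)\<rfloor>"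
    unfolding thickening_def by fastforce
  then show ?thesis
    using finite_card_le_within_dist[OF connected degree assms] unfolding preimage_bound_def
    by blast
qed

lemma fibre_finite_card_le: "finite (f -` {f u}) \<and> card (f -` {f u}) \<le> fibre_bound"
proof -
  have "gdist E u v \<le> nat \<lfloor>A * B\<rfloor>" if "f v = f u" for v
    using gdist_le_image[of u v] that le_nat_floor by (simp add: gdist_self)
  then have "\<forall>v\<in>f -` {f u}. \<exists>x\<in>{u}. gdist E (id x) v \<le> nat \<lfloor>A * B\<rfloor>" by simp
  then show ?thesis
    using finite_card_le_within_dist[OF connected degree, of "{u}"] unfolding fibre_bound_def
    by simp
qed

lemma injective_submatching_avoiding_thickening:
  assumes "finite M" "inj_on fst M" "inj_on snd M" "finite F"
  shows "\<exists>S\<subseteq>M. inj_on (\<lambda>p. f (fst p)) S \<and> inj_on (\<lambda>p. f (snd p)) S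
    \<and> (\<forall>p\<in>S. f (fst p) \<notin> thickening F \<and> f (snd p) \<notin> thickening F)
    \<and> card M \<le> 2 * fibre_bound * card S + 2 * (card F * preimage_bound)"
proof -
  let ?avoiding = "{p\<in>M. f (fst p) \<notin> thickening F \<and> f (snd p) \<notin> thickening F}"
  have "card M \<le> card ?avoiding + 2 * card (f -` thickening F)"
    using card_matching_le_avoiding[OF assms(1-3), of "f -` thickening F"]
      preimage_thickening_finite_card_le[OF assms(4)] by simp
  then have card_M: "card M \<le> card ?avoiding + 2 * (card F * preimage_bound)"
    using preimage_thickening_finite_card_le[OF assms(4)] by linarith
  have fibres: "\<forall>s\<in>?avoiding. card {s'\<in>?avoiding. f (h s') = f (h s)} \<le> fibre_bound"
    if "inj_on h M" for h :: "'a \<times> 'a \<Rightarrow> 'a"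
  proof
    fix s
    have "card {s'\<in>?avoiding. f (h s') = f (h s)} \<le> card (f -` {f (h s)})"
      by (rule card_inj_on_le[OF inj_on_subset[OF that]])
        (use fibre_finite_card_le[of "h s"] in auto)
    then show "card {s'\<in>?avoiding. f (h s') = f (h s)} \<le> fibre_bound"
      using fibre_finite_card_le[of "h s"] by linarith
  qed
  obtain S where S: "S \<subseteq> ?avoiding" "inj_on (\<lambda>p. f (fst p)) S" "inj_on (\<lambda>p. f (snd p)) S"
    "card ?avoiding \<le> 2 * fibre_bound * card S"
    using exists_large_subset_inj_on_both[OF _ fibres[OF assms(2)] fibres[OF assms(3)]] assms(1)
    by auto
  show ?thesis
    using S card_M by (intro exI[of _ S]) auto
qed

lemma image_collision_in_thickening:
  assumes "separates E F U Ob r" "nat \<lceil>A * B\<rceil> < r" "u \<in> U" "x \<in> Ob" "f u = f x"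
  shows "f u \<in> thickening F"
proof -
  have close: "real (gdist E u x) \<le> A * B"
    using gdist_le_image[of u x] assms(5) by (simp add: gdist_self)
  obtain ps where ps: "is_path E ps" "hd ps = u" "last ps = x" "path_len ps = gdist E u x"
    using gdist_geodesic[OF connected] by blast
  have "path_len ps < r"
    using ps(4) close real_nat_ceiling_ge[of "A * B"] assms(2) by linarith
  then obtain y where y: "y \<in> set ps" "y \<in> F"
    using assms(1,3,4) ps unfolding separates_def by fastforce
  have "gdist E u y \<le> gdist E u x" using gdist_hd_le_path_len[OF ps(1) y(1)] ps(2,4) by simp
  then have "real (gdist E u y) \<le> A * B" using close by linarith
  then have "real (gdist E' (f u) (f y)) \<le> A * (A * B) + B"
    using upper[of u y] constants_pos(1) by (smt (verit) mult_left_mono)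
  moreover have "A * (A * B) + B \<le> radius"
    unfolding radius_def using constants_pos by simp
  ultimately have "real (gdist E' (f u) (f y)) \<le> radius" by linarith
  then show ?thesis using y(2) unfolding thickening_def by blast
qed

lemma separates_image:
  assumes "separates E F U Ob r" "lift_len * r' < r"
  shows "separates E' (thickening F) (f ` U) (f ` Ob) r'"
  unfolding separates_def
proof (intro allI impI, rule ccontr)
  fix ws assume ws: "is_path E' ws \<and> hd ws \<in> f ` U \<and> last ws \<in> f ` Ob"
    and short_avoiding: "\<not> (set ws \<inter> thickening F \<noteq> {} \<or> r' \<le> path_len ws)"
  obtain w0 ws' where ws_eq: "ws = w0 # ws'" using ws by (cases ws) (auto simp: is_path_def)
  obtain u x where u: "u \<in> U" "hd ws = f u" and x: "x \<in> Ob" "last ws = f x" using ws by blast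
  obtain wk where wk: "wk \<noteq> []" "successively E wk" "hd wk = u" "last wk = x" "set wk \<inter> F = {}"
    "length wk \<le> Suc (lift_len * Suc (length ws'))"
    using lift_walk[of w0 ws' F u x] ws ws_eq short_avoiding u x constants_pos(3)
    by (auto simp: is_path_iff_successively gdist_self)
  have "Suc (length ws') \<le> r'" using short_avoiding ws_eq by (simp add: path_len_def)
  then have "lift_len * Suc (length ws') \<le> lift_len * r'" by (rule mult_le_mono2)
  then show False
    using separates_walk_long[OF assms(1) wk(1,2)] wk(3-6) u x assms(2) by simp
qed

lemma complete_matching_image:
  assumes "\<forall>(u, v)\<in>M. gdist E u v \<le> k" "S \<subseteq> M"
    and "inj_on (\<lambda>p. f (fst p)) S" "inj_on (\<lambda>p. f (snd p)) S"
    and "A * real k + B \<le> real k'"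
  shows "complete_matching_k E' k' ((\<lambda>p. f (fst p)) ` S) ((\<lambda>p. f (snd p)) ` S)"
  unfolding complete_matching_k_def
proof (intro exI[of _ "(\<lambda>p. (f (fst p), f (snd p))) ` S"] conjI)
  show "\<forall>(u', v')\<in>(\<lambda>p. (f (fst p), f (snd p))) ` S. gdist E' u' v' \<le> k'"
  proof clarify
    fix p assume "p \<in> S"
    then have "gdist E (fst p) (snd p) \<le> k" using assms(1,2) by (cases p) auto
    then have "real (gdist E' (f (fst p)) (f (snd p))) \<le> A * real k + B"
      using upper[of "fst p" "snd p"] constants_pos(1) by (smt (verit) mult_left_mono of_nat_le_iff)
    then show "gdist E' (f (fst p)) (f (snd p)) \<le> k'" using assms(5) by linarith
  qed
qed (use assms(3,4) in \<open>auto simp: inj_on_def image_image\<close>)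

lemma large_injective_submatching:
  assumes "finite M" "inj_on fst M" "inj_on snd M" "finite F" "M \<noteq> {}"
    and "(2 * fibre_bound * m' * thickening_bound + 2 * preimage_bound + 1) * card F \<le> card M"
  shows "\<exists>S\<subseteq>M. inj_on (\<lambda>p. f (fst p)) S \<and> inj_on (\<lambda>p. f (snd p)) S
    \<and> (\<forall>p\<in>S. f (fst p) \<notin> thickening F \<and> f (snd p) \<notin> thickening F)
    \<and> S \<noteq> {} \<and> m' * card (thickening F) \<le> card S"
proof -
  obtain S where S: "S \<subseteq> M" "inj_on (\<lambda>p. f (fst p)) S" "inj_on (\<lambda>p. f (snd p)) S"
    "\<forall>p\<in>S. f (fst p) \<notin> thickening F \<and> f (snd p) \<notin> thickening F"
    "card M \<le> 2 * fibre_bound * card S + 2 * (card F * preimage_bound)"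
    using injective_submatching_avoiding_thickening[OF assms(1-4)] by blast
  have "2 * fibre_bound * (m' * thickening_bound * card F) + card F \<le> 2 * fibre_bound * card S"
    using assms(6) S(5) by (simp add: algebra_simps)
  then have few_F: "card F \<le> 2 * fibre_bound * card S"
    and "2 * fibre_bound * (m' * thickening_bound * card F) \<le> 2 * fibre_bound * card S"
    by linarith+
  then have many: "m' * thickening_bound * card F \<le> card S"
    unfolding fibre_bound_def by simp
  have "m' * card (thickening F) \<le> m' * (card F * thickening_bound)"
    using thickening_finite_card_le[OF assms(4)] by (intro mult_le_mono2) blast
  also have "\<dots> \<le> card S" using many by (simp add: algebra_simps)
  finally have "m' * card (thickening F) \<le> card S" .
  moreover have "S \<noteq> {}"
  proof
    assume "S = {}"
    then have "card M = 0" using S(5) few_F by simp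
    then show False using assms(1,5) by simp
  qed
  ultimately show ?thesis using S(1-4) by blast
qed

text \<open>The multiplier of card F pays for the 2 preimage_bound pairs per vertex of F discarded near
  the thickening and for the factor 2 fibre_bound lost in the greedy selection; the separation
  distance absorbs the stretch factor lift_len of lifted walks and rules out collisions of
  images.\<close>

lemma UFO_image:
  assumes ufo: "UFO E (2 * fibre_bound * m' * thickening_bound + 2 * preimage_bound + 1) k
      (lift_len * r' + nat \<lceil>A * B\<rceil> + 1) U F Ob"
    and k': "A * real k + B \<le> real k'"
  shows "\<exists>U' Ob'. UFO E' m' k' r' U' (thickening F) Ob'"
proof -
  have fin: "finite U" "finite F" "finite Ob" and "U \<noteq> {}"
    and card_U: "(2 * fibre_bound * m' * thickening_bound + 2 * preimage_bound + 1) * card F \<le> card U"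
    and sep: "separates E F U Ob (lift_len * r' + nat \<lceil>A * B\<rceil> + 1)"
    using ufo unfolding UFO_iff_separates by auto
  obtain M where M: "M \<subseteq> U \<times> Ob" "inj_on fst M" "inj_on snd M" "fst ` M = U" "snd ` M = Ob"
    "\<forall>(u, v)\<in>M. gdist E u v \<le> k"
    using ufo unfolding UFO_def complete_matching_k_def by blast
  have "finite M" using M(1) fin finite_subset by blast
  moreover have "card M = card U" "M \<noteq> {}" using card_image[OF M(2)] M(4) \<open>U \<noteq> {}\<close> by auto
  ultimately obtain S where S: "S \<subseteq> M" "inj_on (\<lambda>p. f (fst p)) S" "inj_on (\<lambda>p. f (snd p)) S"
    "\<forall>p\<in>S. f (fst p) \<notin> thickening F \<and> f (snd p) \<notin> thickening F"
    "S \<noteq> {}" "m' * card (thickening F) \<le> card S"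
    using large_injective_submatching[of M F m'] M(2,3) fin(2) card_U by auto
  define U' where "U' = (\<lambda>p. f (fst p)) ` S"
  define Ob' where "Ob' = (\<lambda>p. f (snd p)) ` S"
  have "U' \<inter> Ob' = {}"
  proof -
    have "f (fst p) \<noteq> f (snd q)" if "p \<in> S" "q \<in> S" for p q
    proof -
      have "fst p \<in> U" "snd q \<in> Ob" using S(1) M(4,5) that by auto
      then show ?thesis using image_collision_in_thickening[OF sep] S(4) that by auto
    qed
    then show ?thesis unfolding U'_def Ob'_def by blast
  qed
  moreover have "complete_matching_k E' k' U' Ob'"
    unfolding U'_def Ob'_def by (rule complete_matching_image[OF M(6) S(1-3) k'])
  moreover have "separates E' (thickening F) U' Ob' r'"
  proof (rule separates_mono[OF separates_image[OF sep]])
    show "U' \<subseteq> f ` U" "Ob' \<subseteq> f ` Ob" unfolding U'_def Ob'_def using S(1) M(4,5) by auto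
  qed simp
  moreover have "finite U'" "finite Ob'" "finite (thickening F)"
    using S(1) \<open>finite M\<close> thickening_finite_card_le[OF fin(2)] finite_subset
    unfolding U'_def Ob'_def by auto
  moreover have "U' \<inter> thickening F = {}" "thickening F \<inter> Ob' = {}" "U' \<noteq> {}"
    using S(4,5) unfolding U'_def Ob'_def by auto
  moreover have "m' * card (thickening F) \<le> card U'"
    using S(2,6) card_image unfolding U'_def by metis
  ultimately show ?thesis unfolding UFO_iff_separates by blast
qed

lemma extraterrestrial_image:
  assumes "extraterrestrial E"
  shows "extraterrestrial E'"
  unfolding extraterrestrial_def
proof
  fix m'
  obtain k where k: "\<forall>r. \<exists>U F Ob.
      UFO E (2 * fibre_bound * m' * thickening_bound + 2 * preimage_bound + 1) k r U F Ob"
    using assms unfolding extraterrestrial_def by blast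
  show "\<exists>k'. \<forall>r'. \<exists>U' F' Ob'. UFO E' m' k' r' U' F' Ob'"
  proof (intro exI[of _ "nat \<lceil>A * real k + B\<rceil>"] allI)
    fix r'
    from k obtain U F Ob where
      "UFO E (2 * fibre_bound * m' * thickening_bound + 2 * preimage_bound + 1) k
        (lift_len * r' + nat \<lceil>A * B\<rceil> + 1) U F Ob"
      by blast
    from UFO_image[OF this real_nat_ceiling_ge[of "A * real k + B"]]
    show "\<exists>U' F' Ob'. UFO E' m' (nat \<lceil>A * real k + B\<rceil>) r' U' F' Ob'" by blast
  qed
qed

end

theorem theoremA:
  fixes E :: "'a \<Rightarrow> 'a \<Rightarrow> bool" and E' :: "'b \<Rightarrow> 'b \<Rightarrow> bool"
  assumes "graph E" and "graph E'"
    and "connected_graph E" and "connected_graph E'"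
    and "bounded_degree E" and "bounded_degree E'"
    and "quasi_isometric E E'"
    and "extraterrestrial E"
  shows "extraterrestrial E'"
proof -
  obtain f :: "'a \<Rightarrow> 'b" and A B C :: real where pos: "A > 0" "B > 0" "C > 0"
    and bounds: "\<forall>v1 v2. real (gdist E v1 v2) / A - B \<le> real (gdist E' (f v1) (f v2))
                 \<and> real (gdist E' (f v1) (f v2)) \<le> A * real (gdist E v1 v2) + B"
    and onto: "\<forall>v'. \<exists>v. real (gdist E' v' (f v)) \<le> C"
    using assms(7) unfolding quasi_isometric_def by blast
  obtain D D' where degrees: "\<forall>v. finite {w. E v w} \<and> card {w. E v w} \<le> D"
    "\<forall>v. finite {w. E' v w} \<and> card {w. E' v w} \<le> D'"
    using assms(5,6) unfolding bounded_degree_def by blast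
  interpret quasi_isometric_graphs E E' f A B C D D'
    by unfold_locales (use assms(2-4) pos bounds onto degrees in auto)
  show ?thesis using extraterrestrial_image[OF assms(8)] .
qed

end
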